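(* Let $X_\sigma$ be the root monoid associated with a cone $\sigma$, a $k$-dimensional regular face $\tau$ with primitive ray generators $p_1,\ldots,p_k$, and a compatible set of Demazure roots $\{e_1^{(r)},e_2^{(r)}\}_{r=1}^k$. Then the set of idempotents of $X_\sigma$ is invariant under each one-parameter subgroup $R_{p_i}$, $i=1,\ldots,k$; in particular it is invariant under $R_\tau=\langle R_{p_1},\ldots,R_{p_k}\rangle$.
   Context: $\mathbb{K}$ algebraically closed of characteristic zero; $N$ lattice, $M$ dual, $S_\sigma=\sigma^\vee\cap M$, $X_\sigma=\operatorname{Spec}\bigoplus_{u\in S_\sigma}\mathbb{K}\chi^u$ with torus $\mathbb{T}=\operatorname{Hom}(M,\mathbb{K}^\times)$. Regular face: primitive ray generators extend to a basis of $N$. A Demazure root for ray generator $p_i$ of $\sigma$: $e\in M$ with $\langle p_i,e\rangle=-1$ and $\langle p_j,e\rangle\ge0$ for other ray generators. Compatibility with $\tau$: $\langle p_s,e_1^{(r)}\rangle=\langle p_s,e_2^{(r)}\rangle=-\delta_{rs}$. Root monoid multiplication: $\chi^u(x*y)=\sum_{\bar i+\bar j=\langle\bar p,u\rangle}\prod_r\binom{\langle p_r,u\rangle}{i_r}\chi^{u+\sum_ri_re_2^{(r)}}(x)\chi^{u+\sum_rj_re_1^{(r)}}(y)$, $\langle\bar p,u\rangle=(\langle p_1,u\rangle,\ldots,\langle p_k,u\rangle)$. An idempotent is $x$ with $x*x=x$. For $p\in N$, $R_p$ is the one-parameter subgroup of $\mathbb{T}$ with $\chi^u(R_p(s)x)=s^{\langle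 p,u\rangle}\chi^u(x)$. *)

theory Defs
  imports "HOL-Analysis.Analysis" "HOL-Computational_Algebra.Polynomial"
begin

text \<open>Lattice N = Z^n and its dual M = Z^n are modelled as functions 'n \<Rightarrow> int
  for a finite index type 'n; the pairing is the standard dot product.\<close>

definition pair :: "('n::finite \<Rightarrow> int) \<Rightarrow> ('n \<Rightarrow> int) \<Rightarrow> int" where
  "pair p u = (\<Sum>i\<in>UNIV. p i * u i)"

definition primitive :: "('n::finite \<Rightarrow> int) \<Rightarrow> bool" where
  "primitive v \<longleftrightarrow> v \<noteq> (\<lambda>_. 0) \<and> (\<forall>(m::int) w. v = (\<lambda>i. m * w i) \<longrightarrow> \<bar>m\<bar> = 1)"

definition real_cone :: "('n::finite \<Rightarrow> int) set \<Rightarrow> ('n \<Rightarrow> real) set" where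
  "real_cone P = {(\<lambda>i. \<Sum>q\<in>P. a q * real_of_int (q i)) | a. \<forall>q\<in>P. a q \<ge> 0}"

text \<open>P is the set of primitive ray generators of a strongly convex rational
  polyhedral cone sigma = real_cone P.\<close>
definition cone_rays :: "('n::finite \<Rightarrow> int) set \<Rightarrow> bool" where
  "cone_rays P \<longleftrightarrow> finite P \<and> (\<forall>q\<in>P. primitive q)
     \<and> (\<forall>q\<in>P. (\<lambda>i. real_of_int (q i)) \<notin> real_cone (P - {q}))
     \<and> (\<forall>v. v \<in> real_cone P \<and> (\<lambda>i. - v i) \<in> real_cone P \<longrightarrow> v = (\<lambda>_. 0))"

definition dual_monoid :: "('n::finite \<Rightarrow> int) set \<Rightarrow> ('n \<Rightarrow> int) set" where
  "dual_monoid P = {u. \<forall>q\<in>P. pair q u \<ge> 0}"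

definition is_face :: "('n::finite \<Rightarrow> int) set \<Rightarrow> ('n \<Rightarrow> int) set \<Rightarrow> bool" where
  "is_face P F \<longleftrightarrow> F \<subseteq> P \<and> (\<exists>u \<in> dual_monoid P. \<forall>q\<in>P. pair q u = 0 \<longleftrightarrow> q \<in> F)"

definition lattice_basis :: "('n::finite \<Rightarrow> int) set \<Rightarrow> bool" where
  "lattice_basis B \<longleftrightarrow> finite B \<and>
     (\<forall>v. \<exists>!c. (\<forall>b. b \<notin> B \<longrightarrow> c b = 0) \<and> v = (\<lambda>i. \<Sum>b\<in>B. c b * b i))"

definition regular_face :: "('n::finite \<Rightarrow> int) set \<Rightarrow> nat \<Rightarrow> (nat \<Rightarrow> ('n \<Rightarrow> int)) \<Rightarrow> bool" where
  "regular_face P k p \<longleftrightarrow> inj_on p {..<k} \<and> is_face P (p ` {..<k})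
     \<and> (\<exists>B. lattice_basis B \<and> p ` {..<k} \<subseteq> B)"

definition demazure_root :: "('n::finite \<Rightarrow> int) set \<Rightarrow> ('n \<Rightarrow> int) \<Rightarrow> ('n \<Rightarrow> int) \<Rightarrow> bool" where
  "demazure_root P p e \<longleftrightarrow> p \<in> P \<and> pair p e = -1 \<and> (\<forall>q\<in>P. q \<noteq> p \<longrightarrow> pair q e \<ge> 0)"

definition compatible_roots ::
  "('n::finite \<Rightarrow> int) set \<Rightarrow> nat \<Rightarrow> (nat \<Rightarrow> ('n \<Rightarrow> int)) \<Rightarrow> (nat \<Rightarrow> ('n \<Rightarrow> int)) \<Rightarrow> (nat \<Rightarrow> ('n \<Rightarrow> int)) \<Rightarrow> bool" where
  "compatible_roots P k p e1 e2 \<longleftrightarrow>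
     (\<forall>r<k. demazure_root P (p r) (e1 r) \<and> demazure_root P (p r) (e2 r)) \<and>
     (\<forall>r<k. \<forall>s<k. pair (p s) (e1 r) = (if r = s then -1 else 0)
                 \<and> pair (p s) (e2 r) = (if r = s then -1 else 0))"

text \<open>K-points of X_sigma = Spec K[S_sigma]: monoid homomorphisms S_sigma \<rightarrow> (K,*),
  with x u = \<chi>^u(x); extended by 0 outside S_sigma.\<close>
definition toric_points :: "('n::finite \<Rightarrow> int) set \<Rightarrow> (('n \<Rightarrow> int) \<Rightarrow> 'k::field) set" where
  "toric_points P = {x. x (\<lambda>_. 0) = 1 \<and>
     (\<forall>u\<in>dual_monoid P. \<forall>v\<in>dual_monoid P. x (\<lambda>c. u c + v c) = x u * x v) \<and>
     (\<forall>u. u \<notin> dual_monoid P \<longrightarrow> x u = 0)}"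

definition root_mult ::
  "('n::finite \<Rightarrow> int) set \<Rightarrow> nat \<Rightarrow> (nat \<Rightarrow> ('n \<Rightarrow> int)) \<Rightarrow> (nat \<Rightarrow> ('n \<Rightarrow> int)) \<Rightarrow> (nat \<Rightarrow> ('n \<Rightarrow> int))
   \<Rightarrow> (('n \<Rightarrow> int) \<Rightarrow> 'k::field) \<Rightarrow> (('n \<Rightarrow> int) \<Rightarrow> 'k) \<Rightarrow> (('n \<Rightarrow> int) \<Rightarrow> 'k)" where
  "root_mult P k p e1 e2 x y = (\<lambda>u. if u \<in> dual_monoid P then
      (\<Sum>i\<in>(\<Pi>\<^sub>E r\<in>{..<k}. {0..nat (pair (p r) u)}).
         (\<Prod>r<k. of_nat (nat (pair (p r) u) choose i r))
         * x (\<lambda>c. u c + (\<Sum>r<k. int (i r) * e2 r c))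
         * y (\<lambda>c. u c + (\<Sum>r<k. (pair (p r) u - int (i r)) * e1 r c)))
    else 0)"

definition idempotents ::
  "('n::finite \<Rightarrow> int) set \<Rightarrow> nat \<Rightarrow> (nat \<Rightarrow> ('n \<Rightarrow> int)) \<Rightarrow> (nat \<Rightarrow> ('n \<Rightarrow> int)) \<Rightarrow> (nat \<Rightarrow> ('n \<Rightarrow> int))
   \<Rightarrow> (('n \<Rightarrow> int) \<Rightarrow> 'k::field) set" where
  "idempotents P k p e1 e2 = {x \<in> toric_points P. root_mult P k p e1 e2 x x = x}"

definition one_param :: "('n::finite \<Rightarrow> int) \<Rightarrow> 'k::field \<Rightarrow> (('n \<Rightarrow> int) \<Rightarrow> 'k) \<Rightarrow> (('n \<Rightarrow> int) \<Rightarrow> 'k)" where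
  "one_param q s x = (\<lambda>u. s powi (pair q u) * x u)"

text \<open>R_tau: the subgroup of the torus generated by R_{p_0},...,R_{p_(k-1)}, as maps on points
  (closed under the generators; inverses are generators since R_q(s)^{-1} = R_q(1/s)).\<close>
inductive_set R_tau :: "nat \<Rightarrow> (nat \<Rightarrow> ('n::finite \<Rightarrow> int)) \<Rightarrow> ((('n \<Rightarrow> int) \<Rightarrow> 'k::field) \<Rightarrow> (('n \<Rightarrow> int) \<Rightarrow> 'k)) set"
  for k p where
  id_in: "id \<in> R_tau k p"
| step: "g \<in> R_tau k p \<Longrightarrow> r < k \<Longrightarrow> s \<noteq> 0 \<Longrightarrow> one_param (p r) s \<circ> g \<in> R_tau k p"

end

theory Submission
  imports Defs
begin

text \<open>Each R_p_i(s) is an endomorphism of the root monoid. It scales \<open>\<chi>\<^sup>u\<close> by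
  s^<p_i,u>, and by compatibility of the roots the two factors of the summand indexed by j
  in the multiplication formula have p_i-degrees <p_i,u> - j_i and j_i, which add up to
  <p_i,u>. An endomorphism maps idempotents to idempotents, and R_tau is generated by
  the R_p_i(s).\<close>

lemma pair_zero_right [simp]: "pair q (\<lambda>_. 0) = 0"
  by (simp add: pair_def)

lemma pair_add_right: "pair q (\<lambda>c. u c + v c) = pair q u + pair q v"
  by (simp add: pair_def distrib_left sum.distrib)

lemma pair_add_sum_right:
  "pair q (\<lambda>c. u c + (\<Sum>r<k. f r * e r c)) = pair q u + (\<Sum>r<k. f r * pair q (e r))"
  unfolding pair_def
  by (simp add: distrib_left sum.distrib sum_distrib_left mult.left_commute sum.swap[of _ "{..<k}"])

lemma pair_add_sum_dual_right:
  fixes i k :: nat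
  assumes "i < k" and dual: "\<And>r. r < k \<Longrightarrow> pair q (e r) = (if r = i then -1 else 0)"
  shows "pair q (\<lambda>c. u c + (\<Sum>r<k. f r * e r c)) = pair q u - f i"
proof -
  have "(\<Sum>r<k. f r * pair q (e r)) = (\<Sum>r<k. if r = i then - f r else 0)"
    by (rule sum.cong) (simp_all add: dual)
  also have "\<dots> = - f i"
    using \<open>i < k\<close> by (subst sum.delta) auto
  finally show ?thesis
    by (simp add: pair_add_sum_right)
qed

lemma one_param_toric_points:
  assumes "x \<in> toric_points P" and "s \<noteq> 0"
  shows "one_param q s x \<in> toric_points P"
  using assms by (auto simp: toric_points_def one_param_def pair_add_right power_int_add)

lemma compatible_roots_pair:
  assumes "compatible_roots P k p e1 e2" and "i < k" and "r < k"
  shows "pair (p i) (e1 r) = (if r = i then -1 else 0)"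
    and "pair (p i) (e2 r) = (if r = i then -1 else 0)"
  using assms unfolding compatible_roots_def by (metis eq_commute)+

lemma power_int_diff_mult_power:
  fixes s :: "'a::field"
  assumes "s \<noteq> 0"
  shows "s powi (b - int j) * s ^ j = s powi b"
  using assms by (simp add: power_int_diff power_int_of_nat)

lemma root_mult_one_param:
  assumes comp: "compatible_roots P k p e1 e2" and "i < k" and "s \<noteq> 0"
  shows "root_mult P k p e1 e2 (one_param (p i) s x) (one_param (p i) s y)
       = one_param (p i) s (root_mult P k p e1 e2 x y)"
proof
  fix u
  have deg_left: "pair (p i) (\<lambda>c. u c + (\<Sum>r<k. int (j r) * e2 r c)) = pair (p i) u - int (j i)"
    for j :: "nat \<Rightarrow> nat"
    using \<open>i < k\<close> compatible_roots_pair(2)[OF comp \<open>i < k\<close>] by (rule pair_add_sum_dual_right)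
  have deg_right:
    "pair (p i) (\<lambda>c. u c + (\<Sum>r<k. (pair (p r) u - int (j r)) * e1 r c)) = int (j i)"
    for j :: "nat \<Rightarrow> nat"
    using pair_add_sum_dual_right[OF \<open>i < k\<close> compatible_roots_pair(1)[OF comp \<open>i < k\<close>]]
    by simp
  show "root_mult P k p e1 e2 (one_param (p i) s x) (one_param (p i) s y) u
      = one_param (p i) s (root_mult P k p e1 e2 x y) u"
    unfolding root_mult_def
    by (simp add: one_param_def sum_distrib_left, intro impI sum.cong)
      (simp_all add: deg_left deg_right power_int_diff_mult_power[OF \<open>s \<noteq> 0\<close>])
qed

lemma one_param_idempotents:
  assumes "compatible_roots P k p e1 e2" and "i < k" and "s \<noteq> 0"
    and "x \<in> idempotents P k p e1 e2"
  shows "one_param (p i) s x \<in> idempotents P k p e1 e2"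
proof -
  have "x \<in> toric_points P" and "root_mult P k p e1 e2 x x = x"
    using assms(4) by (simp_all add: idempotents_def)
  then show ?thesis
    using one_param_toric_points[OF _ assms(3)] root_mult_one_param[OF assms(1-3), of x x]
    by (simp add: idempotents_def)
qed

lemma R_tau_idempotents:
  assumes "compatible_roots P k p e1 e2" and "g \<in> R_tau k p"
    and "x \<in> idempotents P k p e1 e2"
  shows "g x \<in> idempotents P k p e1 e2"
  using assms(2,3)
  by (induction g rule: R_tau.induct) (simp_all add: one_param_idempotents[OF assms(1)])

theorem mainTheorem8:
  fixes P :: "('n::finite \<Rightarrow> int) set"
    and k :: nat
    and p e1 e2 :: "nat \<Rightarrow> ('n \<Rightarrow> int)"
  assumes "cone_rays P"
    and "regular_face P k p"
    and "compatible_roots P k p e1 e2"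
  shows "(\<forall>i<k. \<forall>s::'k::{alg_closed_field, field_char_0}. s \<noteq> 0 \<longrightarrow>
            (\<forall>x \<in> idempotents P k p e1 e2. one_param (p i) s x \<in> idempotents P k p e1 e2))
       \<and> (\<forall>(g :: (('n \<Rightarrow> int) \<Rightarrow> 'k) \<Rightarrow> (('n \<Rightarrow> int) \<Rightarrow> 'k)).
            g \<in> R_tau k p \<longrightarrow>
            (\<forall>x \<in> idempotents P k p e1 e2. g x \<in> idempotents P k p e1 e2))"
  using one_param_idempotents[OF assms(3)] R_tau_idempotents[OF assms(3)] by blast

end
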